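(* Let $p>1$ and let $\varphi$ be an analytic self-map of $\mathbb{D}$ with $\varphi\in S^p$. If $D_\varphi:S^p\to S^p$ is bounded, then $C_\varphi:S^p\to S^p$ is bounded.
   Context: $\mathbb{D}$ is the open unit disk. For $p>1$, $H^p$ is the Hardy space on $\mathbb{D}$ with norm $\|g\|_{H^p}^p=\sup_{0<r<1}\int_0^{2\pi}|g(re^{i\theta})|^p\frac{d\theta}{2\pi}$; $S^p$ is the space of analytic $f$ on $\mathbb{D}$ with $f'\in H^p$, normed by $\|f\|_{S^p}=|f(0)|+\|f'\|_{H^p}$. $C_\varphi f=f\circ\varphi$ and $D_\varphi f=f'\circ\varphi$. *)

theory Defs
  imports "HOL-Analysis.Analysis"
begin

definition unit_disc :: "complex set" where
  "unit_disc = ball 0 1"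

definition integral_mean :: "real \<Rightarrow> (complex \<Rightarrow> complex) \<Rightarrow> real \<Rightarrow> real" where
  "integral_mean p g r =
     integral {0..2*pi} (\<lambda>\<theta>. norm (g (complex_of_real r * cis \<theta>)) powr p) / (2*pi)"

definition hardy :: "real \<Rightarrow> (complex \<Rightarrow> complex) set" where
  "hardy p = {g. g holomorphic_on unit_disc \<and>
                 bdd_above (integral_mean p g ` {0<..<1})}"

definition hardy_norm :: "real \<Rightarrow> (complex \<Rightarrow> complex) \<Rightarrow> real" where
  "hardy_norm p g = (SUP r\<in>{0<..<1}. integral_mean p g r) powr (1/p)"

definition Sp :: "real \<Rightarrow> (complex \<Rightarrow> complex) set" where
  "Sp p = {f. f holomorphic_on unit_disc \<and> deriv f \<in> hardy p}"

definition Sp_norm :: "real \<Rightarrow> (complex \<Rightarrow> complex) \<Rightarrow> real" where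
  "Sp_norm p f = norm (f 0) + hardy_norm p (deriv f)"

definition comp_op :: "(complex \<Rightarrow> complex) \<Rightarrow> (complex \<Rightarrow> complex) \<Rightarrow> (complex \<Rightarrow> complex)" where
  "comp_op \<phi> f = f \<circ> \<phi>"

definition deriv_comp_op :: "(complex \<Rightarrow> complex) \<Rightarrow> (complex \<Rightarrow> complex) \<Rightarrow> (complex \<Rightarrow> complex)" where
  "deriv_comp_op \<phi> f = deriv f \<circ> \<phi>"

definition bounded_on_Sp :: "real \<Rightarrow> ((complex \<Rightarrow> complex) \<Rightarrow> (complex \<Rightarrow> complex)) \<Rightarrow> bool" where
  "bounded_on_Sp p T \<longleftrightarrow>
     (\<forall>f\<in>Sp p. T f \<in> Sp p) \<and>
     (\<exists>C. \<forall>f\<in>Sp p. Sp_norm p (T f) \<le> C * Sp_norm p f)"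

end

theory Submission
  imports Defs "HOL-Complex_Analysis.Complex_Analysis"
begin

text \<open>For \<open>f \<in> S^p\<close> let \<open>F\<close> be the primitive of \<open>f\<close> with \<open>F(0) = 0\<close>. Then
  \<open>F \<in> S^p\<close> with \<open>\<parallel>F\<parallel>_{S^p} = \<parallel>f\<parallel>_{H^p}\<close> and \<open>C_\<phi> f = D_\<phi> F\<close>, so
  \<open>\<parallel>C_\<phi> f\<parallel>_{S^p} \<le> \<parallel>D_\<phi>\<parallel> \<parallel>f\<parallel>_{H^p}\<close>. It remains to see \<open>S^p \<subseteq> H^p\<close> with
  \<open>\<parallel>f\<parallel>_{H^p} \<le> 2 \<parallel>f\<parallel>_{S^p}\<close>: integrating \<open>f'\<close> along radii gives
  \<open>|f(re^{i\<theta>})| \<le> |f(0)| + \<integral>_0^r |f'(se^{i\<theta>})| ds\<close>, and convexity of \<open>x^p\<close>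
  (Jensen on \<open>[0,r]\<close>, \<open>r \<le> 1\<close>) together with Fubini turns this into
  \<open>M_p(r,f)^p \<le> 2^{p-1} (|f(0)|^p + sup_s M_p(s,f')^p)\<close>.\<close>

lemma continuous_on_powr_nonneg:
  fixes h :: "'a::topological_space \<Rightarrow> real"
  assumes "continuous_on S h" "\<And>x. x \<in> S \<Longrightarrow> h x \<ge> 0" "p > 0"
  shows "continuous_on S (\<lambda>x. h x powr p)"
  using assms unfolding continuous_on_def
  by (auto intro!: tendsto_powr' simp: eventually_at_filter)

lemma powr_tangent_le:
  fixes p m x :: real
  assumes p: "p \<ge> 1" and m: "m > 0" and x: "x \<ge> 0"
  shows "m powr p + p * m powr (p - 1) * (x - m) \<le> x powr p"
proof (cases "x = 0")
  case True
  have "m powr (p - 1) * m = m powr p"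
    using m by (simp add: powr_mult_base mult.commute)
  moreover have "m powr p \<le> p * m powr p"
    using mult_right_mono[OF p, of "m powr p"] by simp
  ultimately show ?thesis
    using True by (simp add: mult.assoc)
next
  case False
  have "p * m powr (p - 1) * (x - m) \<le> x powr p - m powr p"
    by (rule convex_on_imp_above_tangent[OF powr_convex[OF p]])
       (use m x False in \<open>auto simp: interior_open intro!: derivative_eq_intros\<close>)
  then show ?thesis
    by simp
qed

lemma powr_add_le_two_powr:
  fixes a b p :: real
  assumes p: "p \<ge> 1" and a: "a \<ge> 0" and b: "b \<ge> 0"
  shows "(a + b) powr p \<le> 2 powr (p - 1) * (a powr p + b powr p)"
proof (cases "a + b = 0")
  case True
  then show ?thesis
    using a b by simp
next
  case False
  define m where "m = (a + b) / 2"
  have m: "m > 0"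
    using a b False by (simp add: m_def)
  have "p * m powr (p - 1) * (a - m) + p * m powr (p - 1) * (b - m) = 0"
    by (simp add: m_def algebra_simps)
  then have "2 * m powr p \<le> a powr p + b powr p"
    using powr_tangent_le[OF p m a] powr_tangent_le[OF p m b] by linarith
  moreover have "m powr p = (a + b) powr p / (2 * 2 powr (p - 1))"
    using a b by (simp add: m_def powr_divide powr_diff)
  ultimately show ?thesis
    by (simp add: field_simps)
qed

text \<open>Jensen's inequality for \<open>x\<^sup>p\<close> on \<open>[0, r]\<close>.\<close>

lemma powr_integral_le_integral_powr:
  fixes h :: "real \<Rightarrow> real"
  assumes p: "p \<ge> 1" and r: "0 \<le> r" "r \<le> 1"
    and hc: "continuous_on {0..r} h" and hn: "\<And>s. s \<in> {0..r} \<Longrightarrow> h s \<ge> 0"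
  shows "(integral {0..r} h) powr p \<le> integral {0..r} (\<lambda>s. h s powr p)"
proof -
  define m where "m = integral {0..r} h"
  have int_h: "h integrable_on {0..r}"
    using hc integrable_continuous_real by blast
  have int_hp: "(\<lambda>s. h s powr p) integrable_on {0..r}"
    using hc hn p by (intro integrable_continuous_real continuous_on_powr_nonneg) auto
  have "m \<ge> 0"
    unfolding m_def using hn by (intro integral_nonneg int_h) auto
  show ?thesis
  proof (cases "m = 0")
    case True
    then show ?thesis
      using p unfolding m_def[symmetric] by (simp add: hn integral_nonneg int_hp)
  next
    case False
    with \<open>m \<ge> 0\<close> have m: "m > 0"
      by simp
    define c where "c = p * m powr (p - 1)"
    have cm: "c * m = p * m powr p"
      unfolding c_def using m by (simp add: powr_mult_base mult.commute mult.left_commute)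
    have "integral {0..r} (\<lambda>s. m powr p + c * (h s - m)) \<le> integral {0..r} (\<lambda>s. h s powr p)"
      using powr_tangent_le[OF p m] hn
      by (intro integral_le int_hp integrable_continuous_real continuous_intros hc)
         (auto simp: c_def)
    moreover have "integral {0..r} (\<lambda>s. m powr p + c * (h s - m)) = r * (m powr p - c * m) + c * m"
    proof -
      have "integral {0..r} (\<lambda>s. m powr p + c * (h s - m))
          = integral {0..r} (\<lambda>s. m powr p - c * m) + integral {0..r} (\<lambda>s. c * h s)"
        by (subst integral_add[symmetric])
           (auto intro: integrable_on_mult_right int_h simp: algebra_simps)
      then show ?thesis
        using r unfolding m_def by simp
    qed
    moreover have "0 \<le> (p - 1) * (1 - r) * m powr p"
      using p r by simp
    ultimately show ?thesis
      unfolding m_def[symmetric] cm by (simp add: algebra_simps)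
  qed
qed

lemma powr_add_root_le:
  fixes a b p :: real
  assumes p: "p \<ge> 1" and a: "a \<ge> 0" and b: "b \<ge> 0"
  shows "(a powr p + b powr p) powr (1 / p) \<le> a + b"
proof -
  have split: "x powr p = x * x powr (p - 1)" if "x \<ge> 0" for x :: real
    using that p by (cases "x = 0") (auto simp: powr_mult_base)
  have "a powr p + b powr p \<le> a * (a + b) powr (p - 1) + b * (a + b) powr (p - 1)"
    using a b p by (auto simp: split intro!: add_mono mult_left_mono powr_mono2)
  also have "\<dots> = (a + b) powr p"
    using a b by (simp add: split algebra_simps)
  finally have "(a powr p + b powr p) powr (1 / p) \<le> ((a + b) powr p) powr (1 / p)"
    using p by (intro powr_mono2) auto
  also have "\<dots> = a + b"
    using p a b by (simp add: powr_powr)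
  finally show ?thesis .
qed

lemma two_powr_add_root_le:
  fixes a b p :: real
  assumes p: "p \<ge> 1" and a: "a \<ge> 0" and b: "b \<ge> 0"
  shows "(2 powr (p - 1) * (a powr p + b)) powr (1 / p) \<le> 2 * (a + b powr (1 / p))"
proof -
  have "(2 powr (p - 1)) powr (1 / p) = (2::real) powr ((p - 1) / p)"
    by (simp add: powr_powr)
  also have "\<dots> \<le> 2 powr 1"
    using p by (intro powr_mono) auto
  finally have "(2 powr (p - 1)) powr (1 / p) \<le> (2::real)"
    by simp
  moreover have "(a powr p + b) powr (1 / p) \<le> a + b powr (1 / p)"
    using powr_add_root_le[OF p a, of "b powr (1 / p)"] p b by (simp add: powr_powr)
  ultimately have "(2 powr (p - 1)) powr (1 / p) * (a powr p + b) powr (1 / p) \<le> 2 * (a + b powr (1 / p))"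
    by (rule mult_mono) auto
  then show ?thesis
    using b by (simp add: powr_mult)
qed

lemma polar_in_unit_disc: "\<bar>s\<bar> < 1 \<Longrightarrow> complex_of_real s * cis t \<in> unit_disc"
  by (simp add: unit_disc_def norm_mult)

lemma continuous_on_circle:
  assumes "continuous_on unit_disc g" "\<bar>r\<bar> < 1"
  shows "continuous_on UNIV (\<lambda>t. g (complex_of_real r * cis t))"
  by (rule continuous_on_compose2[OF assms(1)])
     (use assms(2) in \<open>auto intro!: continuous_intros polar_in_unit_disc\<close>)

lemma continuous_on_ray:
  assumes "continuous_on unit_disc g" "r < 1"
  shows "continuous_on {0..r} (\<lambda>s. g (complex_of_real s * cis t))"
  by (rule continuous_on_compose2[OF assms(1)])
     (use assms(2) in \<open>auto intro!: continuous_intros polar_in_unit_disc\<close>)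

lemma continuous_on_polar_powr:
  assumes "continuous_on unit_disc g" "r < 1" "p > 0"
  shows "continuous_on (UNIV \<times> {0..r}) (\<lambda>(t, s). norm (g (complex_of_real s * cis t)) powr p)"
proof -
  have "continuous_on (UNIV \<times> {0..r}) (\<lambda>x. g (complex_of_real (snd x) * cis (fst x)))"
    by (rule continuous_on_compose2[OF assms(1)])
       (use assms(2) in \<open>auto intro!: continuous_intros polar_in_unit_disc\<close>)
  then show ?thesis
    using assms(3) unfolding case_prod_unfold
    by (intro continuous_on_powr_nonneg continuous_intros) auto
qed

lemma integrable_circle_powr:
  assumes "continuous_on unit_disc g" "0 \<le> r" "r < 1" "p > 0"
  shows "(\<lambda>t. norm (g (complex_of_real r * cis t)) powr p) integrable_on {0..2*pi}"
  using continuous_on_circle[OF assms(1), of r] assms(2-4)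
  by (intro integrable_continuous_real continuous_on_powr_nonneg continuous_intros)
     (auto elim: continuous_on_subset)

lemma integral_mean_nonneg:
  assumes "continuous_on unit_disc g" "0 \<le> r" "r < 1" "p > 0"
  shows "integral_mean p g r \<ge> 0"
  unfolding integral_mean_def
  by (intro divide_nonneg_pos integral_nonneg integrable_circle_powr assms) auto

lemma integral_mean_eq:
  "integral_mean p g = (\<lambda>s. integral {0..2*pi} (\<lambda>t. norm (g (complex_of_real s * cis t)) powr p) / (2*pi))"
  by (simp add: fun_eq_iff integral_mean_def)

lemma continuous_on_integral_mean:
  assumes "continuous_on unit_disc g" "r < 1" "p > 0"
  shows "continuous_on {0..r} (integral_mean p g)"
proof -
  have "continuous_on ({0..r} \<times> cbox 0 (2*pi))
      (\<lambda>x. (\<lambda>(t, s). norm (g (complex_of_real s * cis t)) powr p) (snd x, fst x))"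
    by (rule continuous_on_compose2[OF continuous_on_polar_powr[OF assms]])
       (auto intro!: continuous_intros)
  then have "continuous_on ({0..r} \<times> cbox 0 (2*pi)) (\<lambda>(s, t). norm (g (complex_of_real s * cis t)) powr p)"
    by (simp add: case_prod_unfold)
  from integral_continuous_on_param[OF this] show ?thesis
    unfolding integral_mean_eq by (intro continuous_intros) (simp_all add: cbox_interval)
qed

lemma integral_circle_integral_ray:
  assumes "continuous_on unit_disc g" "r < 1" "p > 0"
  shows "integral {0..2*pi} (\<lambda>t. integral {0..r} (\<lambda>s. norm (g (complex_of_real s * cis t)) powr p))
       = 2 * pi * integral {0..r} (integral_mean p g)"
proof -
  have "continuous_on (cbox (0, 0) (2*pi, r)) (\<lambda>(t, s). norm (g (complex_of_real s * cis t)) powr p)"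
    by (rule continuous_on_subset[OF continuous_on_polar_powr[OF assms]])
       (auto simp: cbox_Pair_eq cbox_interval)
  from integral_swap_continuous[OF this] show ?thesis
    by (simp add: cbox_interval integral_mean_eq)
qed

text \<open>At \<open>s = 0\<close> the bound is not assumed; the integral does not see that point.\<close>

lemma integral_integral_mean_le:
  assumes "continuous_on unit_disc g" "0 < r" "r < 1" "p > 0"
    and M: "\<And>s. s \<in> {0<..r} \<Longrightarrow> integral_mean p g s \<le> M"
  shows "integral {0..r} (integral_mean p g) \<le> M"
proof -
  define m where "m s = min (integral_mean p g s) M" for s
  have "M \<ge> 0"
    using integral_mean_nonneg[OF assms(1) _ assms(3,4)] M[of r] assms(2) by force
  have "integral {0..r} (integral_mean p g) = integral {0..r} m"
    by (rule integral_spike[of "{0}"]) (use M in \<open>auto simp: m_def min_def\<close>)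
  also have "\<dots> \<le> integral {0..r} (\<lambda>s. M)"
    unfolding m_def
    by (intro integral_le integrable_continuous_real continuous_on_min
        continuous_on_integral_mean assms(1,3,4) continuous_on_const) auto
  also have "\<dots> \<le> M"
    using assms(2,3) \<open>M \<ge> 0\<close> by (simp add: mult_left_le_one_le)
  finally show ?thesis .
qed

lemma norm_ray_le:
  assumes hf: "f holomorphic_on unit_disc" and r: "0 \<le> r" "r < 1"
  shows "norm (f (complex_of_real r * cis t))
       \<le> norm (f 0) + integral {0..r} (\<lambda>s. norm (deriv f (complex_of_real s * cis t)))"
proof -
  have od: "open unit_disc"
    by (simp add: unit_disc_def)
  have "((\<lambda>s. cis t * deriv f (complex_of_real s * cis t)) has_integral
          f (complex_of_real r * cis t) - f (complex_of_real 0 * cis t)) {0..r}"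
  proof (rule fundamental_theorem_of_calculus[OF r(1)])
    fix x assume x: "x \<in> {0..r}"
    have "(f has_field_derivative deriv f (complex_of_real x * cis t))
            (at (complex_of_real x * cis t) within (\<lambda>s. complex_of_real s * cis t) ` {0..r})"
      using x r by (intro holomorphic_derivI[OF hf od] polar_in_unit_disc) auto
    moreover have "((\<lambda>s. complex_of_real s * cis t) has_vector_derivative cis t) (at x within {0..r})"
      by (auto intro!: derivative_eq_intros)
    ultimately show "((\<lambda>s. f (complex_of_real s * cis t)) has_vector_derivative
            cis t * deriv f (complex_of_real x * cis t)) (at x within {0..r})"
      using field_vector_diff_chain_within by (simp add: o_def)
  qed
  then have FTC: "((\<lambda>s. cis t * deriv f (complex_of_real s * cis t)) has_integral
                    f (complex_of_real r * cis t) - f 0) {0..r}"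
    by simp
  have "norm (f (complex_of_real r * cis t) - f 0)
      = norm (integral {0..r} (\<lambda>s. cis t * deriv f (complex_of_real s * cis t)))"
    using integral_unique[OF FTC] by simp
  also have "\<dots> \<le> integral {0..r} (\<lambda>s. norm (deriv f (complex_of_real s * cis t)))"
    using continuous_on_ray[OF holomorphic_on_imp_continuous_on[OF holomorphic_deriv[OF hf od]] r(2)]
    by (intro integral_norm_bound_integral has_integral_integrable[OF FTC] integrable_continuous_real)
       (auto simp: norm_mult intro: continuous_intros)
  finally show ?thesis
    using norm_triangle_ineq2[of "f (complex_of_real r * cis t)" "f 0"] by linarith
qed

lemma norm_ray_powr_le:
  assumes p: "p \<ge> 1" and hf: "f holomorphic_on unit_disc" and r: "0 \<le> r" "r < 1"
  shows "norm (f (complex_of_real r * cis t)) powr p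
       \<le> 2 powr (p - 1) * (norm (f 0) powr p
            + integral {0..r} (\<lambda>s. norm (deriv f (complex_of_real s * cis t)) powr p))"
proof -
  define I where "I = integral {0..r} (\<lambda>s. norm (deriv f (complex_of_real s * cis t)))"
  have cont: "continuous_on {0..r} (\<lambda>s. norm (deriv f (complex_of_real s * cis t)))"
    using continuous_on_ray[OF holomorphic_on_imp_continuous_on[OF holomorphic_deriv] r(2)] hf
    by (intro continuous_intros) (auto simp: unit_disc_def)
  have "I \<ge> 0"
    unfolding I_def by (intro integral_nonneg integrable_continuous_real cont) auto
  have "norm (f (complex_of_real r * cis t)) powr p \<le> (norm (f 0) + I) powr p"
    using norm_ray_le[OF hf r] p unfolding I_def by (intro powr_mono2) auto
  also have "\<dots> \<le> 2 powr (p - 1) * (norm (f 0) powr p + I powr p)"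
    using p \<open>I \<ge> 0\<close> by (intro powr_add_le_two_powr) auto
  also have "I powr p \<le> integral {0..r} (\<lambda>s. norm (deriv f (complex_of_real s * cis t)) powr p)"
    unfolding I_def using p r by (intro powr_integral_le_integral_powr cont) auto
  finally show ?thesis
    by (simp add: mult_left_mono)
qed

lemma integral_mean_le_deriv:
  assumes p: "p \<ge> 1" and hf: "f holomorphic_on unit_disc" and r: "0 < r" "r < 1"
    and M: "\<And>s. s \<in> {0<..r} \<Longrightarrow> integral_mean p (deriv f) s \<le> M"
  shows "integral_mean p f r \<le> 2 powr (p - 1) * (norm (f 0) powr p + M)"
proof -
  define J where "J t = integral {0..r} (\<lambda>s. norm (deriv f (complex_of_real s * cis t)) powr p)" for t
  have cf: "continuous_on unit_disc f" and cdf: "continuous_on unit_disc (deriv f)"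
    using hf by (auto intro!: holomorphic_on_imp_continuous_on holomorphic_deriv simp: unit_disc_def)
  have "continuous_on UNIV (\<lambda>t. integral (cbox 0 r) (\<lambda>s. norm (deriv f (complex_of_real s * cis t)) powr p))"
    using continuous_on_polar_powr[OF cdf r(2)] p
    by (intro integral_continuous_on_param) (auto simp: cbox_interval)
  then have int_J: "J integrable_on {0..2*pi}"
    unfolding J_def cbox_interval by (rule integrable_continuous_real[OF continuous_on_subset]) auto
  have "integral {0..2*pi} (\<lambda>t. norm (f (complex_of_real r * cis t)) powr p)
      \<le> integral {0..2*pi} (\<lambda>t. 2 powr (p - 1) * (norm (f 0) powr p + J t))"
    unfolding J_def using norm_ray_powr_le[OF p hf] p r int_J[unfolded J_def]
    by (intro integral_le integrable_circle_powr cf integrable_on_mult_right integrable_add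
        integrable_const_ivl) auto
  also have "\<dots> = 2 powr (p - 1) * (2 * pi * norm (f 0) powr p + integral {0..2*pi} J)"
    using integral_add[OF integrable_const_ivl int_J] by simp
  also have "integral {0..2*pi} J = 2 * pi * integral {0..r} (integral_mean p (deriv f))"
    unfolding J_def using cdf r p by (intro integral_circle_integral_ray) auto
  also have "integral {0..r} (integral_mean p (deriv f)) \<le> M"
    using cdf r p M by (intro integral_integral_mean_le) auto
  finally show ?thesis
    unfolding integral_mean_def by (simp add: divide_le_eq algebra_simps mult_left_mono)
qed

lemma Sp_imp_hardy:
  assumes p: "p \<ge> 1" and f: "f \<in> Sp p"
  shows "f \<in> hardy p" "hardy_norm p f \<le> 2 * Sp_norm p f"
proof -
  have hf: "f holomorphic_on unit_disc" and bdd: "bdd_above (integral_mean p (deriv f) ` {0<..<1})"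
    using f by (auto simp: Sp_def hardy_def)
  have cf: "continuous_on unit_disc f" and cdf: "continuous_on unit_disc (deriv f)"
    using hf by (auto intro!: holomorphic_on_imp_continuous_on holomorphic_deriv simp: unit_disc_def)
  define S where "S = (SUP s\<in>{0<..<1}. integral_mean p (deriv f) s)"
  define B where "B = 2 powr (p - 1) * (norm (f 0) powr p + S)"
  have mean_le: "integral_mean p f r \<le> B" if "r \<in> {0<..<1}" for r
    unfolding B_def S_def using that
    by (intro integral_mean_le_deriv p hf cSUP_upper bdd) auto
  have bddf: "bdd_above (integral_mean p f ` {0<..<1})"
    by (rule bdd_aboveI2) (rule mean_le)
  then show "f \<in> hardy p"
    using hf by (simp add: hardy_def)
  have half: "1 / 2 \<in> {0<..<1::real}"
    by simp
  have "S \<ge> 0"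
    unfolding S_def using integral_mean_nonneg[OF cdf, of "1 / 2" p] p
    by (intro cSUP_upper2[OF bdd half]) auto
  have "(SUP r\<in>{0<..<1}. integral_mean p f r) \<ge> 0"
    using integral_mean_nonneg[OF cf, of "1 / 2" p] p
    by (intro cSUP_upper2[OF bddf half]) auto
  then have "hardy_norm p f \<le> B powr (1 / p)"
    unfolding hardy_norm_def using p by (intro powr_mono2 cSUP_least mean_le) auto
  also have "\<dots> \<le> 2 * Sp_norm p f"
    unfolding B_def Sp_norm_def hardy_norm_def S_def[symmetric]
    by (rule two_powr_add_root_le[OF p norm_ge_zero \<open>S \<ge> 0\<close>])
  finally show "hardy_norm p f \<le> 2 * Sp_norm p f" .
qed

lemma hardy_cong:
  assumes "\<And>z. z \<in> unit_disc \<Longrightarrow> g z = h z"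
  shows "g \<in> hardy p \<longleftrightarrow> h \<in> hardy p" "hardy_norm p g = hardy_norm p h"
proof -
  have "integral_mean p g r = integral_mean p h r" if "r \<in> {0<..<1}" for r
    unfolding integral_mean_def using assms that by (simp add: polar_in_unit_disc cong: integral_cong)
  then have "integral_mean p g ` {0<..<1} = integral_mean p h ` {0<..<1}"
    by (rule image_cong[OF refl])
  moreover have "g holomorphic_on unit_disc \<longleftrightarrow> h holomorphic_on unit_disc"
    by (rule holomorphic_cong) (simp_all add: assms)
  ultimately show "g \<in> hardy p \<longleftrightarrow> h \<in> hardy p" "hardy_norm p g = hardy_norm p h"
    by (simp_all add: hardy_def hardy_norm_def)
qed

lemma Sp_cong:
  assumes "\<And>z. z \<in> unit_disc \<Longrightarrow> g z = h z"
  shows "g \<in> Sp p \<longleftrightarrow> h \<in> Sp p" "Sp_norm p g = Sp_norm p h"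
proof -
  have "deriv g z = deriv h z" if "z \<in> unit_disc" for z
  proof (rule deriv_cong_ev[OF _ refl])
    have "eventually (\<lambda>w. w \<in> unit_disc) (nhds z)"
      using that by (intro eventually_nhds_in_open) (simp_all add: unit_disc_def)
    then show "eventually (\<lambda>w. g w = h w) (nhds z)"
      by (rule eventually_mono) (rule assms)
  qed
  note hardy_cong[OF this, where p = p]
  moreover have "g holomorphic_on unit_disc \<longleftrightarrow> h holomorphic_on unit_disc"
    by (rule holomorphic_cong) (simp_all add: assms)
  moreover have "g 0 = h 0"
    by (rule assms) (simp add: unit_disc_def)
  ultimately show "g \<in> Sp p \<longleftrightarrow> h \<in> Sp p" "Sp_norm p g = Sp_norm p h"
    by (simp_all add: Sp_def Sp_norm_def)
qed

lemma unit_disc_primitive: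
  assumes "f holomorphic_on unit_disc"
  obtains F where "F holomorphic_on unit_disc" "\<And>z. z \<in> unit_disc \<Longrightarrow> deriv F z = f z" "F 0 = 0"
proof -
  have od: "open unit_disc"
    by (simp add: unit_disc_def)
  obtain G where G: "\<And>z. z \<in> unit_disc \<Longrightarrow> (G has_field_derivative f z) (at z within unit_disc)"
    using holomorphic_convex_primitive'[OF _ od assms] by (auto simp: unit_disc_def)
  define F where "F z = G z - G 0" for z
  have F': "(F has_field_derivative f z) (at z)" if "z \<in> unit_disc" for z
    using G[OF that] at_within_open[OF that od] unfolding F_def[abs_def]
    by (auto intro!: derivative_eq_intros)
  show ?thesis
  proof
    show "F holomorphic_on unit_disc"
      unfolding holomorphic_on_def field_differentiable_def
      using F' by (blast intro: has_field_derivative_at_within)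
    show "deriv F z = f z" if "z \<in> unit_disc" for z
      using F'[OF that] by (rule DERIV_imp_deriv)
  qed (simp add: F_def)
qed

lemma hardy_primitive_in_Sp:
  assumes "f \<in> hardy p"
  obtains F where "F \<in> Sp p" "Sp_norm p F = hardy_norm p f" "\<And>z. z \<in> unit_disc \<Longrightarrow> deriv F z = f z"
proof -
  have "f holomorphic_on unit_disc"
    using assms by (simp add: hardy_def)
  then obtain F where "F holomorphic_on unit_disc"
    and dF: "\<And>z. z \<in> unit_disc \<Longrightarrow> deriv F z = f z" and "F 0 = 0"
    using unit_disc_primitive by blast
  then show ?thesis
    using hardy_cong[OF dF, where p = p] assms by (intro that) (auto simp: Sp_def Sp_norm_def)
qed

theorem corollary3p4:
  fixes p :: real and \<phi> :: "complex \<Rightarrow> complex"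
  assumes "p > 1"
    and "\<phi> holomorphic_on unit_disc"
    and "\<phi> ` unit_disc \<subseteq> unit_disc"
    and "\<phi> \<in> Sp p"
    and "bounded_on_Sp p (deriv_comp_op \<phi>)"
  shows "bounded_on_Sp p (comp_op \<phi>)"
proof -
  obtain C where D_in: "\<And>f. f \<in> Sp p \<Longrightarrow> deriv f \<circ> \<phi> \<in> Sp p"
    and D_bound: "\<And>f. f \<in> Sp p \<Longrightarrow> Sp_norm p (deriv f \<circ> \<phi>) \<le> C * Sp_norm p f"
    using assms(5) unfolding bounded_on_Sp_def deriv_comp_op_def by blast
  have "f \<circ> \<phi> \<in> Sp p \<and> Sp_norm p (f \<circ> \<phi>) \<le> 2 * max C 0 * Sp_norm p f" if f: "f \<in> Sp p" for f
  proof -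
    have fH: "f \<in> hardy p" "hardy_norm p f \<le> 2 * Sp_norm p f"
      using Sp_imp_hardy assms(1) f by auto
    obtain F where F: "F \<in> Sp p" "Sp_norm p F = hardy_norm p f"
      and dF: "\<And>z. z \<in> unit_disc \<Longrightarrow> deriv F z = f z"
      using hardy_primitive_in_Sp[OF fH(1)] by blast
    have eq: "(f \<circ> \<phi>) z = (deriv F \<circ> \<phi>) z" if "z \<in> unit_disc" for z
      using dF assms(3) that by auto
    have "Sp_norm p (f \<circ> \<phi>) = Sp_norm p (deriv F \<circ> \<phi>)"
      using Sp_cong(2)[of "f \<circ> \<phi>" "deriv F \<circ> \<phi>", OF eq] .
    also have "\<dots> \<le> C * hardy_norm p f"
      using D_bound[OF F(1)] F(2) by simp
    also have "\<dots> \<le> max C 0 * (2 * Sp_norm p f)"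
      using fH(2) by (intro mult_mono) (auto simp: hardy_norm_def)
    finally show ?thesis
      using Sp_cong(1)[of "f \<circ> \<phi>" "deriv F \<circ> \<phi>", OF eq] D_in[OF F(1)] by simp
  qed
  then show ?thesis
    unfolding bounded_on_Sp_def comp_op_def by blast
qed

end
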